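(* Let $t\ge3$ be an integer. Every $t$-villa is $(2P_3,C_4,C_6,C_7,T_0)$-free and contains an induced $t$-pentagon. Moreover, every $t$-villa is anticonnected and contains no simplicial and no universal vertices.
   Context: Graphs are finite, simple, nonnull. A graph is $(H_1,\dots,H_m)$-free if it has no induced subgraph isomorphic to any $H_i$. $P_k$, $C_k$ are the path and cycle on $k$ vertices; $2P_3$ is two disjoint copies of $P_3$. $T_0$ is the graph with vertices $p,q,u_0,u_1,u_2,u_3,w_1,w_2,w_3$ and edges $pq,pu_0,pu_2,pu_3,qu_1,qu_2,qu_3,u_0w_1,u_1w_1,u_2w_2,u_3w_3,w_1w_2,w_1w_3,w_2w_3$. For $t\ge3$ the $t$-pentagon is the graph on vertices $a,b_1,\dots,b_t,c_1,\dots,c_t$ where $a$ is adjacent to every $b_i$ and to no $c_i$, $\{b_1,\dots,b_t\}$ is stable, $\{c_1,\dots,c_t\}$ is a clique, and $b_ic_j$ is an edge iff $i=j$. A graph is anticonnected if its complement is connected. A vertex is simplicial if its neighbours form a (possibly empty) clique, universal if adjacent to all other vertices. For disjoint vertex sets $X,Y$, $X$ is complete (anticomplete) to $Y$ if every vertex of $X$ is adjacent (nonadjacent) to every vertex of $Y$. A $t$-villa is a graph $Q$ whose vertex set partitions into nonempty cliques $A,B_1,\dots,B_t,C_1,\dots,C_t$ such that $A$ is complete to $B_1\cup\dots\cup B_t$ and anticomplete to $C_1\cup\dots\cup C_t$; the $B_i$ are pairwise anticomplete; the $C_i$ are pairwise complete; $B_i$ is anticomplete to $C_j$ for $i\ne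 j$; and each $B_i$ can be ordered $b^i_1,\dots,b^i_{r_i}$ with $\emptyset\ne N(b^i_{r_i})\cap C_i\subseteq\dots\subseteq N(b^i_1)\cap C_i=C_i$. *)

theory Defs
  imports Main
begin

text \<open>A finite simple nonnull graph: vertex set V, adjacency relation E
  (only its restriction to V matters), symmetric and irreflexive on V.\<close>
definition graph :: "'a set \<Rightarrow> ('a \<Rightarrow> 'a \<Rightarrow> bool) \<Rightarrow> bool" where
  "graph V E \<longleftrightarrow> finite V \<and> V \<noteq> {} \<and>
     (\<forall>x\<in>V. \<forall>y\<in>V. E x y \<longleftrightarrow> E y x) \<and> (\<forall>x\<in>V. \<not> E x x)"

definition has_induced :: "'a set \<Rightarrow> ('a \<Rightarrow> 'a \<Rightarrow> bool) \<Rightarrow> 'b set \<Rightarrow> ('b \<Rightarrow> 'b \<Rightarrow> bool) \<Rightarrow> bool" where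
  "has_induced V E W F \<longleftrightarrow> (\<exists>f. inj_on f W \<and> f ` W \<subseteq> V \<and>
     (\<forall>x\<in>W. \<forall>y\<in>W. F x y \<longleftrightarrow> E (f x) (f y)))"

definition neighbours :: "'a set \<Rightarrow> ('a \<Rightarrow> 'a \<Rightarrow> bool) \<Rightarrow> 'a \<Rightarrow> 'a set" where
  "neighbours V E v = {u\<in>V. E v u}"

definition clique :: "('a \<Rightarrow> 'a \<Rightarrow> bool) \<Rightarrow> 'a set \<Rightarrow> bool" where
  "clique E X \<longleftrightarrow> (\<forall>x\<in>X. \<forall>y\<in>X. x \<noteq> y \<longrightarrow> E x y)"

definition complete_to :: "('a \<Rightarrow> 'a \<Rightarrow> bool) \<Rightarrow> 'a set \<Rightarrow> 'a set \<Rightarrow> bool" where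
  "complete_to E X Y \<longleftrightarrow> (\<forall>x\<in>X. \<forall>y\<in>Y. E x y)"

definition anticomplete_to :: "('a \<Rightarrow> 'a \<Rightarrow> bool) \<Rightarrow> 'a set \<Rightarrow> 'a set \<Rightarrow> bool" where
  "anticomplete_to E X Y \<longleftrightarrow> (\<forall>x\<in>X. \<forall>y\<in>Y. \<not> E x y)"

definition simplicial :: "'a set \<Rightarrow> ('a \<Rightarrow> 'a \<Rightarrow> bool) \<Rightarrow> 'a \<Rightarrow> bool" where
  "simplicial V E v \<longleftrightarrow> clique E (neighbours V E v)"

definition universal :: "'a set \<Rightarrow> ('a \<Rightarrow> 'a \<Rightarrow> bool) \<Rightarrow> 'a \<Rightarrow> bool" where
  "universal V E v \<longleftrightarrow> (\<forall>u\<in>V. u \<noteq> v \<longrightarrow> E v u)"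

definition graph_connected :: "'a set \<Rightarrow> ('a \<Rightarrow> 'a \<Rightarrow> bool) \<Rightarrow> bool" where
  "graph_connected V E \<longleftrightarrow>
     (\<forall>x\<in>V. \<forall>y\<in>V. (\<lambda>u v. u \<in> V \<and> v \<in> V \<and> E u v)\<^sup>*\<^sup>* x y)"

definition complement :: "('a \<Rightarrow> 'a \<Rightarrow> bool) \<Rightarrow> 'a \<Rightarrow> 'a \<Rightarrow> bool" where
  "complement E x y \<longleftrightarrow> x \<noteq> y \<and> \<not> E x y"

definition anticonnected :: "'a set \<Rightarrow> ('a \<Rightarrow> 'a \<Rightarrow> bool) \<Rightarrow> bool" where
  "anticonnected V E \<longleftrightarrow> graph_connected V (complement E)"

definition edges_adj :: "(nat \<times> nat) list \<Rightarrow> nat \<Rightarrow> nat \<Rightarrow> bool" where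
  "edges_adj es x y \<longleftrightarrow> (x, y) \<in> set es \<or> (y, x) \<in> set es"

definition P3_V :: "nat set" where "P3_V = {0..<3}"
definition P3_E :: "nat \<Rightarrow> nat \<Rightarrow> bool" where "P3_E = edges_adj [(0,1),(1,2)]"

definition twoP3_V :: "nat set" where "twoP3_V = {0..<6}"
definition twoP3_E :: "nat \<Rightarrow> nat \<Rightarrow> bool" where
  "twoP3_E = edges_adj [(0,1),(1,2),(3,4),(4,5)]"

definition cycle_V :: "nat \<Rightarrow> nat set" where "cycle_V k = {0..<k}"
definition cycle_E :: "nat \<Rightarrow> nat \<Rightarrow> nat \<Rightarrow> bool" where
  "cycle_E k i j \<longleftrightarrow> j = (i + 1) mod k \<or> i = (j + 1) mod k"

text \<open>T0 with p=0, q=1, u0=2, u1=3, u2=4, u3=5, w1=6, w2=7, w3=8.\<close>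
definition T0_V :: "nat set" where "T0_V = {0..<9}"
definition T0_E :: "nat \<Rightarrow> nat \<Rightarrow> bool" where
  "T0_E = edges_adj [(0,1),(0,2),(0,4),(0,5),(1,3),(1,4),(1,5),
                     (2,6),(3,6),(4,7),(5,8),(6,7),(6,8),(7,8)]"

datatype pent_vertex = PA | PB nat | PC nat

definition pentagon_V :: "nat \<Rightarrow> pent_vertex set" where
  "pentagon_V t = {PA} \<union> PB ` {1..t} \<union> PC ` {1..t}"

fun pentagon_E :: "pent_vertex \<Rightarrow> pent_vertex \<Rightarrow> bool" where
  "pentagon_E PA (PB i) = True"
| "pentagon_E (PB i) PA = True"
| "pentagon_E (PC i) (PC j) = (i \<noteq> j)"
| "pentagon_E (PB i) (PC j) = (i = j)"
| "pentagon_E (PC i) (PB j) = (i = j)"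
| "pentagon_E _ _ = False"

definition villa :: "nat \<Rightarrow> 'a set \<Rightarrow> ('a \<Rightarrow> 'a \<Rightarrow> bool) \<Rightarrow> bool" where
  "villa t V E \<longleftrightarrow> graph V E \<and>
    (\<exists>A B C.
      \<comment> \<open>partition of V into nonempty cliques\<close>
      V = A \<union> (\<Union>i\<in>{1..t}. B i) \<union> (\<Union>i\<in>{1..t}. C i) \<and>
      A \<noteq> {} \<and> (\<forall>i\<in>{1..t}. B i \<noteq> {} \<and> C i \<noteq> {}) \<and>
      (\<forall>i\<in>{1..t}. A \<inter> B i = {} \<and> A \<inter> C i = {}) \<and>
      (\<forall>i\<in>{1..t}. \<forall>j\<in>{1..t}. B i \<inter> C j = {}) \<and>
      (\<forall>i\<in>{1..t}. \<forall>j\<in>{1..t}. i \<noteq> j \<longrightarrow> B i \<inter> B j = {} \<and> C i \<inter> C j = {}) \<and>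
      clique E A \<and> (\<forall>i\<in>{1..t}. clique E (B i) \<and> clique E (C i)) \<and>
      \<comment> \<open>adjacency conditions\<close>
      (\<forall>i\<in>{1..t}. complete_to E A (B i) \<and> anticomplete_to E A (C i)) \<and>
      (\<forall>i\<in>{1..t}. \<forall>j\<in>{1..t}. i \<noteq> j \<longrightarrow>
          anticomplete_to E (B i) (B j) \<and> complete_to E (C i) (C j) \<and>
          anticomplete_to E (B i) (C j)) \<and>
      \<comment> \<open>nested neighbourhoods ordering of each B i\<close>
      (\<forall>i\<in>{1..t}. \<exists>bs. distinct bs \<and> set bs = B i \<and>
          neighbours V E (bs ! 0) \<inter> C i = C i \<and>
          neighbours V E (last bs) \<inter> C i \<noteq> {} \<and>
          (\<forall>j k. j \<le> k \<and> k < length bs \<longrightarrow>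
              neighbours V E (bs ! k) \<inter> C i \<subseteq> neighbours V E (bs ! j) \<inter> C i)))"

end

theory Submission
  imports Defs
begin

text \<open>Label each vertex of the villa by its part: A, B i or C i. The non-neighbours of an
A-vertex all lie in the clique formed by the C-parts, the B-vertices induce a disjoint union of
cliques, and the nested B i -- C i edges leave no induced 2K2 between B i and C i. From these
local rules: an induced P3 without A-vertices contains a C-vertex, which excludes 2P3; a hole of
length at least 6 has no A-vertex, and the vertices at distance 2, 3, 4 from a C-vertex on it would
be three consecutive B-vertices; an induced C4 would need a forbidden 2K2; every induced C5 reads
A, B i, C i, C j, B j with i and j distinct, and the three pentagons inside T0 cannot all be read
this way. One vertex from each part, taking from B i a vertex complete to C i, spans a t-pentagon,
and the remaining properties hold as soon as t is at least 2.\<close>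

lemma has_induced_atLeast0LessThanE:
  assumes "has_induced V E {0..<n::nat} F"
  obtains f where "\<And>i. i < n \<Longrightarrow> f i \<in> V"
    and "\<And>i j. i < n \<Longrightarrow> j < n \<Longrightarrow> f i = f j \<longleftrightarrow> i = j"
    and "\<And>i j. i < n \<Longrightarrow> j < n \<Longrightarrow> E (f i) (f j) \<longleftrightarrow> F i j"
proof -
  from assms obtain f where "inj_on f {0..<n}" "f ` {0..<n} \<subseteq> V"
    and "\<forall>x\<in>{0..<n}. \<forall>y\<in>{0..<n}. F x y \<longleftrightarrow> E (f x) (f y)"
    unfolding has_induced_def by blast
  then show thesis
    by (intro that[of f]) (auto simp: inj_on_def)
qed

lemma mod_add_right_cancel_nat: "(a + j) mod k = (b + j) mod (k::nat) \<longleftrightarrow> a mod k = b mod k"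
  by (simp add: mod_eq_iff_dvd_symdiff_nat)

lemma cycle_E_rotate:
  assumes "i < k" "i' < k"
  shows "cycle_E k ((i + j) mod k) ((i' + j) mod k) \<longleftrightarrow> cycle_E k i i'"
proof -
  have succ: "((x + j) mod k + 1) mod k = (x + 1 + j) mod k" for x
    by (simp add: mod_Suc_eq ac_simps)
  show ?thesis
    unfolding cycle_E_def succ mod_add_right_cancel_nat using assms by simp
qed

lemma cycle_E_initial:
  assumes "6 \<le> k" "i < 5" "i' < 5"
  shows "cycle_E k i i' \<longleftrightarrow> i' = i + 1 \<or> i = i' + 1"
  using assms by (simp add: cycle_E_def)

datatype part_kind = A_part | B_part | C_part

locale villa_labelling =
  fixes V :: "'a set" and E :: "'a \<Rightarrow> 'a \<Rightarrow> bool"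
    and kind :: "'a \<Rightarrow> part_kind" and idx :: "'a \<Rightarrow> nat"
  assumes sym: "x \<in> V \<Longrightarrow> y \<in> V \<Longrightarrow> E x y \<Longrightarrow> E y x"
    and irrefl: "x \<in> V \<Longrightarrow> \<not> E x x"
    and A_A: "x \<in> V \<Longrightarrow> y \<in> V \<Longrightarrow> x \<noteq> y \<Longrightarrow> kind x = A_part \<Longrightarrow> kind y = A_part \<Longrightarrow> E x y"
    and A_B: "x \<in> V \<Longrightarrow> y \<in> V \<Longrightarrow> kind x = A_part \<Longrightarrow> kind y = B_part \<Longrightarrow> E x y"
    and A_C: "x \<in> V \<Longrightarrow> y \<in> V \<Longrightarrow> kind x = A_part \<Longrightarrow> kind y = C_part \<Longrightarrow> \<not> E x y"
    and B_B: "x \<in> V \<Longrightarrow> y \<in> V \<Longrightarrow> x \<noteq> y \<Longrightarrow> kind x = B_part \<Longrightarrow> kind y = B_part \<Longrightarrow>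
      E x y \<longleftrightarrow> idx x = idx y"
    and C_C: "x \<in> V \<Longrightarrow> y \<in> V \<Longrightarrow> x \<noteq> y \<Longrightarrow> kind x = C_part \<Longrightarrow> kind y = C_part \<Longrightarrow> E x y"
    and B_C: "x \<in> V \<Longrightarrow> y \<in> V \<Longrightarrow> kind x = B_part \<Longrightarrow> kind y = C_part \<Longrightarrow> E x y \<Longrightarrow>
      idx x = idx y"
    and B_C_nested: "b \<in> V \<Longrightarrow> b' \<in> V \<Longrightarrow> kind b = B_part \<Longrightarrow> kind b' = B_part \<Longrightarrow>
      idx b = idx b' \<Longrightarrow>
      (\<forall>c\<in>V. kind c = C_part \<longrightarrow> E b c \<longrightarrow> E b' c) \<or> (\<forall>c\<in>V. kind c = C_part \<longrightarrow> E b' c \<longrightarrow> E b c)"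
begin

lemma non_neighbour_of_A:
  "a \<in> V \<Longrightarrow> y \<in> V \<Longrightarrow> a \<noteq> y \<Longrightarrow> kind a = A_part \<Longrightarrow> \<not> E a y \<Longrightarrow> kind y = C_part"
  by (cases "kind y") (auto dest: A_A A_B)

lemma A_non_neighbours_adjacent:
  "a \<in> V \<Longrightarrow> y \<in> V \<Longrightarrow> z \<in> V \<Longrightarrow> kind a = A_part \<Longrightarrow> a \<noteq> y \<Longrightarrow> a \<noteq> z \<Longrightarrow> y \<noteq> z \<Longrightarrow>
    \<not> E a y \<Longrightarrow> \<not> E a z \<Longrightarrow> E y z"
  using non_neighbour_of_A C_C by metis

lemma B_transitive:
  "x \<in> V \<Longrightarrow> y \<in> V \<Longrightarrow> z \<in> V \<Longrightarrow> kind x = B_part \<Longrightarrow> kind y = B_part \<Longrightarrow> kind z = B_part \<Longrightarrow>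
    x \<noteq> z \<Longrightarrow> E x y \<Longrightarrow> E y z \<Longrightarrow> E x z"
  using B_B irrefl by metis

lemma induced_P3_has_C:
  assumes "x \<in> V" "y \<in> V" "z \<in> V" "x \<noteq> z" "E x y" "E y z" "\<not> E x z"
    and "kind x \<noteq> A_part" "kind y \<noteq> A_part" "kind z \<noteq> A_part"
  shows "\<exists>v\<in>{x, y, z}. kind v = C_part"
proof (rule ccontr)
  assume "\<not> ?thesis"
  then have "kind x = B_part" "kind y = B_part" "kind z = B_part"
    using assms(8-10) part_kind.exhaust by blast+
  then show False using assms(1-7) B_transitive by blast
qed

lemma no_induced_2P3: "\<not> has_induced V E twoP3_V twoP3_E"
proof
  assume "has_induced V E twoP3_V twoP3_E"
  then obtain f where f_V: "\<And>i. i < 6 \<Longrightarrow> f i \<in> V"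
    and f_eq: "\<And>i j. i < 6 \<Longrightarrow> j < 6 \<Longrightarrow> f i = f j \<longleftrightarrow> i = j"
    and f_adj: "\<And>i j. i < 6 \<Longrightarrow> j < 6 \<Longrightarrow> E (f i) (f j) \<longleftrightarrow> twoP3_E i j"
    unfolding twoP3_V_def by (rule has_induced_atLeast0LessThanE) blast
  note f_simps = f_V f_eq f_adj twoP3_E_def edges_adj_def
  have not_A: "kind (f i) \<noteq> A_part" if "i < 6" for i
  proof
    assume A: "kind (f i) = A_part"
    have "i = 0 \<or> i = 1 \<or> i = 2 \<or> i = 3 \<or> i = 4 \<or> i = 5"
      using that by auto
    then show False
      using A A_non_neighbours_adjacent[of "f i" "f 0" "f 2"]
        A_non_neighbours_adjacent[of "f i" "f 3" "f 5"]
      by (auto simp: f_simps)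
  qed
  obtain c where "c \<in> {f 0, f 1, f 2}" "kind c = C_part"
    using induced_P3_has_C[of "f 0" "f 1" "f 2"] not_A by (auto simp: f_simps)
  moreover obtain c' where "c' \<in> {f 3, f 4, f 5}" "kind c' = C_part"
    using induced_P3_has_C[of "f 3" "f 4" "f 5"] not_A by (auto simp: f_simps)
  ultimately show False
    using C_C[of c c'] by (auto simp: f_simps)
qed

lemma no_induced_long_cycle:
  assumes "6 \<le> k"
  shows "\<not> has_induced V E (cycle_V k) (cycle_E k)"
proof
  assume "has_induced V E (cycle_V k) (cycle_E k)"
  then obtain f where f_V: "\<And>i. i < k \<Longrightarrow> f i \<in> V"
    and f_eq: "\<And>i j. i < k \<Longrightarrow> j < k \<Longrightarrow> f i = f j \<longleftrightarrow> i = j"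
    and f_adj: "\<And>i j. i < k \<Longrightarrow> j < k \<Longrightarrow> E (f i) (f j) \<longleftrightarrow> cycle_E k i j"
    unfolding cycle_V_def by (rule has_induced_atLeast0LessThanE) blast
  \<comment> \<open>the hole read from position j; its first five vertices form an induced path as k \<ge> 6\<close>
  define rot where "rot j i = f ((i + j) mod k)" for j i
  have k_pos: "0 < k" using assms by simp
  have rot_V: "rot j i \<in> V" for j i
    unfolding rot_def using f_V k_pos by simp
  have rot_eq: "rot j i = rot j i' \<longleftrightarrow> i = i'" if "i < 5" "i' < 5" for j i i'
    unfolding rot_def using that assms f_eq mod_add_right_cancel_nat by simp
  have rot_adj: "E (rot j i) (rot j i') \<longleftrightarrow> i' = i + 1 \<or> i = i' + 1" if "i < 5" "i' < 5" for j i i'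
    unfolding rot_def using that assms k_pos
    by (simp add: f_adj cycle_E_rotate cycle_E_initial)
  note rot_simps = rot_V rot_eq rot_adj
  have rot_shift: "rot j i = rot ((i + j) mod k) 0" for j i
    by (simp add: rot_def)
  have "kind (rot j 0) \<noteq> A_part" for j
    using A_non_neighbours_adjacent[of "rot j 0" "rot j 2" "rot j 4"] by (auto simp: rot_simps)
  then have not_A: "kind (rot j i) \<noteq> A_part" for j i
    by (metis rot_shift)
  show False
  proof (cases "\<exists>j. kind (rot j 0) = C_part")
    case True
    then obtain j where C: "kind (rot j 0) = C_part" by blast
    have "kind (rot j i) = B_part" if "i \<in> {2, 3, 4}" for i
    proof -
      have "rot j 0 \<noteq> rot j i" "\<not> E (rot j 0) (rot j i)"
        using that by (auto simp: rot_simps)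
      then have "kind (rot j i) \<noteq> C_part"
        using C C_C rot_V by blast
      then show ?thesis
        using not_A part_kind.exhaust by blast
    qed
    then show False
      using B_transitive[of "rot j 2" "rot j 3" "rot j 4"] by (simp add: rot_simps)
  next
    case False
    then have "kind (rot 0 i) = B_part" for i
      using not_A[of 0 i] rot_shift[of 0 i] part_kind.exhaust by metis
    then show False
      using B_transitive[of "rot 0 0" "rot 0 1" "rot 0 2"] by (simp add: rot_simps)
  qed
qed

lemma B_C_crossing:
  assumes "b \<in> V" "b' \<in> V" "c \<in> V" "c' \<in> V"
    and "kind b = B_part" "kind b' = B_part" "kind c = C_part" "kind c' = C_part"
    and "idx b = idx b'" "E b c" "E b' c'"
  shows "E b c' \<or> E b' c"
  using B_C_nested[of b b'] assms by blast

abbreviation induced_C4 :: "'a \<Rightarrow> 'a \<Rightarrow> 'a \<Rightarrow> 'a \<Rightarrow> bool" where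
  "induced_C4 x0 x1 x2 x3 \<equiv> x0 \<in> V \<and> x1 \<in> V \<and> x2 \<in> V \<and> x3 \<in> V \<and>
     E x0 x1 \<and> E x1 x2 \<and> E x2 x3 \<and> E x3 x0 \<and> \<not> E x0 x2 \<and> \<not> E x1 x3 \<and> x0 \<noteq> x2 \<and> x1 \<noteq> x3"

lemma induced_C4_rotate: "induced_C4 x0 x1 x2 x3 \<Longrightarrow> induced_C4 x1 x2 x3 x0"
  using sym by blast

lemma induced_C4_B_or_C:
  assumes C4: "induced_C4 x0 x1 x2 x3"
  shows "kind x0 = B_part \<or> kind x0 = C_part"
proof (rule ccontr)
  assume "\<not> ?thesis"
  then have A: "kind x0 = A_part"
    using part_kind.exhaust by blast
  then have C: "kind x2 = C_part"
    using C4 non_neighbour_of_A by blast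
  have B: "kind x1 = B_part" "kind x3 = B_part"
    using C4 A C A_C sym by (metis part_kind.exhaust)+
  have "idx x1 = idx x2" "idx x3 = idx x2"
    using C4 B C B_C sym by blast+
  then show False
    using C4 B B_B[of x1 x3] by simp
qed

lemma induced_C4_not_CCBB:
  "induced_C4 x0 x1 x2 x3 \<Longrightarrow> kind x0 = C_part \<Longrightarrow> kind x1 = C_part \<Longrightarrow>
    kind x2 = B_part \<Longrightarrow> kind x3 = B_part \<Longrightarrow> False"
  using B_B[of x2 x3] B_C_crossing[of x2 x3 x1 x0] sym irrefl by blast

lemma no_induced_C4: "\<not> has_induced V E (cycle_V 4) (cycle_E 4)"
proof
  assume "has_induced V E (cycle_V 4) (cycle_E 4)"
  then obtain f where f_V: "\<And>i. i < 4 \<Longrightarrow> f i \<in> V"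
    and f_eq: "\<And>i j. i < 4 \<Longrightarrow> j < 4 \<Longrightarrow> f i = f j \<longleftrightarrow> i = j"
    and f_adj: "\<And>i j. i < 4 \<Longrightarrow> j < 4 \<Longrightarrow> E (f i) (f j) \<longleftrightarrow> cycle_E 4 i j"
    unfolding cycle_V_def by (rule has_induced_atLeast0LessThanE) blast
  have C4: "induced_C4 (f 0) (f 1) (f 2) (f 3)"
    by (simp add: f_V f_eq f_adj cycle_E_def)
  note rotations = C4 induced_C4_rotate[OF C4] induced_C4_rotate[OF induced_C4_rotate[OF C4]]
    induced_C4_rotate[OF induced_C4_rotate[OF induced_C4_rotate[OF C4]]]
  have no_three_B: "\<not> (kind x = B_part \<and> kind y = B_part \<and> kind z = B_part)"
    if "induced_C4 x y z w" for x y z w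
    using that B_transitive by blast
  \<comment> \<open>each diagonal holds exactly one C-vertex, so the two C-vertices are consecutive\<close>
  have "\<not> (kind (f 0) = C_part \<and> kind (f 2) = C_part)"
    "\<not> (kind (f 1) = C_part \<and> kind (f 3) = C_part)"
    using C4 C_C by blast+
  then show False
    using induced_C4_B_or_C[OF rotations(1)] induced_C4_B_or_C[OF rotations(2)]
      induced_C4_B_or_C[OF rotations(3)] induced_C4_B_or_C[OF rotations(4)]
      no_three_B[OF rotations(1)] no_three_B[OF rotations(2)]
      no_three_B[OF rotations(3)] no_three_B[OF rotations(4)]
      induced_C4_not_CCBB[OF rotations(1)] induced_C4_not_CCBB[OF rotations(2)]
      induced_C4_not_CCBB[OF rotations(3)] induced_C4_not_CCBB[OF rotations(4)]
    by auto
qed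

abbreviation induced_C5 :: "'a \<Rightarrow> 'a \<Rightarrow> 'a \<Rightarrow> 'a \<Rightarrow> 'a \<Rightarrow> bool" where
  "induced_C5 x0 x1 x2 x3 x4 \<equiv> x0 \<in> V \<and> x1 \<in> V \<and> x2 \<in> V \<and> x3 \<in> V \<and> x4 \<in> V \<and>
     E x0 x1 \<and> E x1 x2 \<and> E x2 x3 \<and> E x3 x4 \<and> E x4 x0 \<and>
     \<not> E x0 x2 \<and> \<not> E x0 x3 \<and> \<not> E x1 x3 \<and> \<not> E x1 x4 \<and> \<not> E x2 x4 \<and>
     x0 \<noteq> x2 \<and> x0 \<noteq> x3 \<and> x1 \<noteq> x3 \<and> x1 \<noteq> x4 \<and> x2 \<noteq> x4"

lemma induced_C5_rotate: "induced_C5 x0 x1 x2 x3 x4 \<Longrightarrow> induced_C5 x1 x2 x3 x4 x0"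
  using sym by blast

definition pentagon_pattern :: "'a \<Rightarrow> 'a \<Rightarrow> 'a \<Rightarrow> 'a \<Rightarrow> 'a \<Rightarrow> bool" where
  "pentagon_pattern x0 x1 x2 x3 x4 \<longleftrightarrow>
     kind x0 = A_part \<and> kind x1 = B_part \<and> kind x2 = C_part \<and> kind x3 = C_part \<and> kind x4 = B_part \<and>
     idx x1 = idx x2 \<and> idx x4 = idx x3 \<and> idx x1 \<noteq> idx x4"

lemma induced_C5_pattern_at_A:
  assumes C5: "induced_C5 x0 x1 x2 x3 x4" and A: "kind x0 = A_part"
  shows "pentagon_pattern x0 x1 x2 x3 x4"
proof -
  have C: "kind x2 = C_part" "kind x3 = C_part"
    using C5 A non_neighbour_of_A by blast+
  have B: "kind x1 = B_part" "kind x4 = B_part"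
    using C5 A C A_C sym by (metis part_kind.exhaust)+
  have "idx x1 = idx x2" "idx x4 = idx x3"
    using C5 B C B_C sym by blast+
  moreover have "idx x1 \<noteq> idx x4"
    using C5 B B_B[of x1 x4] by auto
  ultimately show ?thesis
    unfolding pentagon_pattern_def using A B C by blast
qed

lemma induced_C5_has_A:
  assumes C5: "induced_C5 x0 x1 x2 x3 x4"
  shows "kind x0 = A_part \<or> kind x1 = A_part \<or> kind x2 = A_part \<or> kind x3 = A_part \<or> kind x4 = A_part"
proof (rule ccontr)
  assume "\<not> ?thesis"
  then have "kind x0 = B_part \<or> kind x0 = C_part" "kind x1 = B_part \<or> kind x1 = C_part"
    "kind x2 = B_part \<or> kind x2 = C_part" "kind x3 = B_part \<or> kind x3 = C_part"
    "kind x4 = B_part \<or> kind x4 = C_part"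
    using part_kind.exhaust by blast+
  \<comment> \<open>the C-vertices are pairwise adjacent, so the other three are consecutive B-vertices\<close>
  moreover have "\<not> (kind x0 = C_part \<and> kind x2 = C_part)" "\<not> (kind x0 = C_part \<and> kind x3 = C_part)"
    "\<not> (kind x1 = C_part \<and> kind x3 = C_part)" "\<not> (kind x1 = C_part \<and> kind x4 = C_part)"
    "\<not> (kind x2 = C_part \<and> kind x4 = C_part)"
    using C5 C_C by blast+
  moreover have "\<not> (kind x0 = B_part \<and> kind x1 = B_part \<and> kind x2 = B_part)"
    "\<not> (kind x1 = B_part \<and> kind x2 = B_part \<and> kind x3 = B_part)"
    "\<not> (kind x2 = B_part \<and> kind x3 = B_part \<and> kind x4 = B_part)"
    "\<not> (kind x3 = B_part \<and> kind x4 = B_part \<and> kind x0 = B_part)"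
    "\<not> (kind x4 = B_part \<and> kind x0 = B_part \<and> kind x1 = B_part)"
    using C5 B_transitive sym by blast+
  ultimately show False
    by auto
qed

lemma induced_C5_pattern:
  assumes "induced_C5 x0 x1 x2 x3 x4"
  shows "pentagon_pattern x0 x1 x2 x3 x4 \<or> pentagon_pattern x1 x2 x3 x4 x0 \<or>
    pentagon_pattern x2 x3 x4 x0 x1 \<or> pentagon_pattern x3 x4 x0 x1 x2 \<or> pentagon_pattern x4 x0 x1 x2 x3"
proof -
  note r1 = induced_C5_rotate[OF assms]
  note r2 = induced_C5_rotate[OF r1]
  note r3 = induced_C5_rotate[OF r2]
  note r4 = induced_C5_rotate[OF r3]
  show ?thesis
    using induced_C5_has_A[OF assms] induced_C5_pattern_at_A[OF assms] induced_C5_pattern_at_A[OF r1]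
      induced_C5_pattern_at_A[OF r2] induced_C5_pattern_at_A[OF r3] induced_C5_pattern_at_A[OF r4]
    by blast
qed

lemma no_induced_T0: "\<not> has_induced V E T0_V T0_E"
proof
  assume "has_induced V E T0_V T0_E"
  then obtain f where f_V: "\<And>i. i < 9 \<Longrightarrow> f i \<in> V"
    and f_eq: "\<And>i j. i < 9 \<Longrightarrow> j < 9 \<Longrightarrow> f i = f j \<longleftrightarrow> i = j"
    and f_adj: "\<And>i j. i < 9 \<Longrightarrow> j < 9 \<Longrightarrow> E (f i) (f j) \<longleftrightarrow> T0_E i j"
    unfolding T0_V_def by (rule has_induced_atLeast0LessThanE) blast
  note f_simps = f_V f_eq f_adj T0_E_def edges_adj_def
  \<comment> \<open>with p = 0, q = 1, u0..u3 = 2..5, w1..w3 = 6..8: the pentagons p-u2-w2-w3-u3,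
    q-u2-w2-w3-u3 and p-u0-w1-u1-q admit no simultaneous A-B-C-C-B labelling\<close>
  have "induced_C5 (f 0) (f 4) (f 7) (f 8) (f 5)" "induced_C5 (f 1) (f 4) (f 7) (f 8) (f 5)"
    "induced_C5 (f 0) (f 2) (f 6) (f 3) (f 1)"
    by (simp_all add: f_simps)
  note patterns = this[THEN induced_C5_pattern, unfolded pentagon_pattern_def]
  have "kind (f u) = B_part \<Longrightarrow> kind (f x) = C_part \<Longrightarrow> idx (f u) = idx (f x)"
    if "u \<in> {4, 5}" "x \<in> {0, 1}" for u x
    using that B_C[of "f u" "f x"] by (auto simp: f_simps)
  then show False
    using patterns by (smt (verit) insertCI part_kind.distinct)
qed

definition part :: "'a \<Rightarrow> pent_vertex" where
  "part x = (case kind x of A_part \<Rightarrow> PA | B_part \<Rightarrow> PB (idx x) | C_part \<Rightarrow> PC (idx x))"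

lemma adjacent_iff_part:
  assumes x: "x \<in> V" and y: "y \<in> V" and "x \<noteq> y"
    and not_B_C: "\<And>i. {part x, part y} \<noteq> {PB i, PC i}"
  shows "E x y \<longleftrightarrow> part x = part y \<or> pentagon_E (part x) (part y)"
proof -
  have sym_xy: "E y x \<longleftrightarrow> E x y"
    using x y sym by blast
  have idx_B_C: "idx x \<noteq> idx y" if "kind x = B_part \<and> kind y = C_part \<or> kind x = C_part \<and> kind y = B_part"
    using that not_B_C[of "idx x"] by (auto simp: part_def doubleton_eq_iff)
  show ?thesis
  proof (cases "kind x"; cases "kind y")
    assume "kind x = A_part" "kind y = A_part"
    then show ?thesis using assms A_A by (simp add: part_def)
  next
    assume "kind x = A_part" "kind y = B_part"
    then show ?thesis using assms A_B by (simp add: part_def)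
  next
    assume "kind x = A_part" "kind y = C_part"
    then show ?thesis using assms A_C by (simp add: part_def)
  next
    assume "kind x = B_part" "kind y = A_part"
    then show ?thesis using assms A_B[of y x] sym_xy by (simp add: part_def)
  next
    assume "kind x = B_part" "kind y = B_part"
    then show ?thesis using assms B_B by (simp add: part_def)
  next
    assume "kind x = B_part" "kind y = C_part"
    then show ?thesis using assms B_C idx_B_C by (auto simp: part_def)
  next
    assume "kind x = C_part" "kind y = A_part"
    then show ?thesis using assms A_C[of y x] sym_xy by (simp add: part_def)
  next
    assume "kind x = C_part" "kind y = B_part"
    then show ?thesis using assms B_C[of y x] idx_B_C sym_xy by (auto simp: part_def)
  next
    assume "kind x = C_part" "kind y = C_part"
    then show ?thesis using assms C_C by (simp add: part_def)
  qed
qed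

end

lemma antitone_list_comparable:
  assumes "\<forall>j k. j \<le> k \<and> k < length xs \<longrightarrow> N (xs ! k) \<subseteq> N (xs ! j)"
    and "x \<in> set xs" "y \<in> set xs"
  shows "N x \<subseteq> N y \<or> N y \<subseteq> N x"
  using assms by (metis in_set_conv_nth nat_le_linear)

lemma antitone_list_last:
  assumes "\<forall>j k. j \<le> k \<and> k < length xs \<longrightarrow> N (xs ! k) \<subseteq> N (xs ! j)"
    and "x \<in> set xs"
  shows "N (last xs) \<subseteq> N x"
proof -
  obtain j where j: "j < length xs" "xs ! j = x"
    using assms(2) by (metis in_set_conv_nth)
  have "xs \<noteq> []"
    using assms(2) by auto
  then have "last xs = xs ! (length xs - 1)"
    by (rule last_conv_nth)
  moreover have "j \<le> length xs - 1" "length xs - 1 < length xs"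
    using j(1) by auto
  ultimately show ?thesis
    using assms(1) j(2) by metis
qed

lemma graph_connected_hub:
  assumes sym: "\<And>x y. x \<in> V \<Longrightarrow> y \<in> V \<Longrightarrow> R x y \<Longrightarrow> R y x"
    and reach: "\<And>x. x \<in> V \<Longrightarrow> (\<lambda>u v. u \<in> V \<and> v \<in> V \<and> R u v)\<^sup>*\<^sup>* x h"
  shows "graph_connected V R"
proof -
  let ?S = "\<lambda>u v. u \<in> V \<and> v \<in> V \<and> R u v"
  have "symp ?S\<^sup>*\<^sup>*"
    using sym by (intro symp_rtranclp) (auto intro: sympI)
  then show ?thesis
    unfolding graph_connected_def using reach by (meson rtranclp_trans sympD)
qed

lemma other_index:
  assumes "2 \<le> t"
  obtains j :: nat where "j \<in> {1..t}" "j \<noteq> i"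
  using assms that[of "if i = 1 then 2 else 1"] by auto

locale villa_partition =
  fixes t :: nat and V :: "'a set" and E :: "'a \<Rightarrow> 'a \<Rightarrow> bool"
    and A :: "'a set" and B C :: "nat \<Rightarrow> 'a set"
  assumes graph: "graph V E"
    and V_eq: "V = A \<union> (\<Union>i\<in>{1..t}. B i) \<union> (\<Union>i\<in>{1..t}. C i)"
    and A_nonempty: "A \<noteq> {}"
    and B_nonempty: "i \<in> {1..t} \<Longrightarrow> B i \<noteq> {}"
    and C_nonempty: "i \<in> {1..t} \<Longrightarrow> C i \<noteq> {}"
    and A_B_disjoint: "i \<in> {1..t} \<Longrightarrow> A \<inter> B i = {}"
    and A_C_disjoint: "i \<in> {1..t} \<Longrightarrow> A \<inter> C i = {}"
    and B_C_disjoint: "i \<in> {1..t} \<Longrightarrow> j \<in> {1..t} \<Longrightarrow> B i \<inter> C j = {}"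
    and B_disjoint: "i \<in> {1..t} \<Longrightarrow> j \<in> {1..t} \<Longrightarrow> i \<noteq> j \<Longrightarrow> B i \<inter> B j = {}"
    and C_disjoint: "i \<in> {1..t} \<Longrightarrow> j \<in> {1..t} \<Longrightarrow> i \<noteq> j \<Longrightarrow> C i \<inter> C j = {}"
    and A_clique: "clique E A"
    and B_clique: "i \<in> {1..t} \<Longrightarrow> clique E (B i)"
    and C_clique: "i \<in> {1..t} \<Longrightarrow> clique E (C i)"
    and A_B_complete: "i \<in> {1..t} \<Longrightarrow> complete_to E A (B i)"
    and A_C_anticomplete: "i \<in> {1..t} \<Longrightarrow> anticomplete_to E A (C i)"
    and B_B_anticomplete: "i \<in> {1..t} \<Longrightarrow> j \<in> {1..t} \<Longrightarrow> i \<noteq> j \<Longrightarrow> anticomplete_to E (B i) (B j)"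
    and C_C_complete: "i \<in> {1..t} \<Longrightarrow> j \<in> {1..t} \<Longrightarrow> i \<noteq> j \<Longrightarrow> complete_to E (C i) (C j)"
    and B_C_anticomplete: "i \<in> {1..t} \<Longrightarrow> j \<in> {1..t} \<Longrightarrow> i \<noteq> j \<Longrightarrow> anticomplete_to E (B i) (C j)"
    and B_ordered: "i \<in> {1..t} \<Longrightarrow> \<exists>bs. distinct bs \<and> set bs = B i \<and>
      neighbours V E (bs ! 0) \<inter> C i = C i \<and> neighbours V E (last bs) \<inter> C i \<noteq> {} \<and>
      (\<forall>j k. j \<le> k \<and> k < length bs \<longrightarrow>
         neighbours V E (bs ! k) \<inter> C i \<subseteq> neighbours V E (bs ! j) \<inter> C i)"

lemma villa_partition_of_villa:
  assumes "villa t V E"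
  obtains A B C where "villa_partition t V E A B C"
  using assms unfolding villa_def
  apply (elim conjE exE)
  subgoal for A B C
    by (rule that[of A B C], unfold_locales) auto
  done

context villa_partition
begin

lemma vertex_cases:
  assumes "x \<in> V"
  obtains "x \<in> A" | i where "i \<in> {1..t}" "x \<in> B i" | i where "i \<in> {1..t}" "x \<in> C i"
  using assms V_eq by blast

lemma A_subset: "A \<subseteq> V"
  and B_subset: "i \<in> {1..t} \<Longrightarrow> B i \<subseteq> V"
  and C_subset: "i \<in> {1..t} \<Longrightarrow> C i \<subseteq> V"
  using V_eq by auto

definition kind :: "'a \<Rightarrow> part_kind" where
  "kind x = (if x \<in> A then A_part else if \<exists>i\<in>{1..t}. x \<in> B i then B_part else C_part)"

definition idx :: "'a \<Rightarrow> nat" where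
  \<comment> \<open>unspecified on A\<close>
  "idx x = (THE i. i \<in> {1..t} \<and> (x \<in> B i \<or> x \<in> C i))"

lemma idx_eqI:
  assumes "i \<in> {1..t}" "x \<in> B i \<or> x \<in> C i"
  shows "idx x = i"
  unfolding idx_def
proof (rule the_equality)
  fix j assume "j \<in> {1..t} \<and> (x \<in> B j \<or> x \<in> C j)"
  then show "j = i"
    using assms B_disjoint C_disjoint B_C_disjoint by blast
qed (use assms in blast)

lemma kind_A_I: "x \<in> A \<Longrightarrow> x \<in> V \<and> kind x = A_part"
  using V_eq by (simp add: kind_def)

lemma kind_B_I: "i \<in> {1..t} \<Longrightarrow> x \<in> B i \<Longrightarrow> x \<in> V \<and> kind x = B_part \<and> idx x = i"
  using V_eq A_B_disjoint idx_eqI by (auto simp: kind_def)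

lemma kind_C_I:
  assumes "i \<in> {1..t}" "x \<in> C i"
  shows "x \<in> V \<and> kind x = C_part \<and> idx x = i"
proof -
  have "x \<notin> A" "\<not> (\<exists>j\<in>{1..t}. x \<in> B j)"
    using assms A_C_disjoint B_C_disjoint by blast+
  then show ?thesis
    using assms V_eq idx_eqI by (auto simp: kind_def)
qed

lemma kind_A_D: "x \<in> V \<Longrightarrow> kind x = A_part \<Longrightarrow> x \<in> A"
  by (metis kind_B_I kind_C_I part_kind.distinct(1,3) vertex_cases)

lemma kind_B_D: "x \<in> V \<Longrightarrow> kind x = B_part \<Longrightarrow> idx x \<in> {1..t} \<and> x \<in> B (idx x)"
  by (metis kind_A_I kind_B_I kind_C_I part_kind.distinct(1,5) vertex_cases)

lemma kind_C_D: "x \<in> V \<Longrightarrow> kind x = C_part \<Longrightarrow> idx x \<in> {1..t} \<and> x \<in> C (idx x)"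
  by (metis kind_A_I kind_B_I kind_C_I part_kind.distinct(3,5) vertex_cases)

lemma B_nested:
  assumes "i \<in> {1..t}" "b \<in> B i" "b' \<in> B i"
  shows "neighbours V E b \<inter> C i \<subseteq> neighbours V E b' \<inter> C i \<or>
    neighbours V E b' \<inter> C i \<subseteq> neighbours V E b \<inter> C i"
proof -
  obtain bs where "set bs = B i" "\<forall>j k. j \<le> k \<and> k < length bs \<longrightarrow>
      neighbours V E (bs ! k) \<inter> C i \<subseteq> neighbours V E (bs ! j) \<inter> C i"
    using B_ordered[OF assms(1)] by blast
  then show ?thesis
    using antitone_list_comparable[where N = "\<lambda>b. neighbours V E b \<inter> C i"] assms(2,3) by blast
qed

lemma B_has_C_neighbour:
  assumes "i \<in> {1..t}" "b \<in> B i"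
  obtains c where "c \<in> C i" "E b c"
  using B_ordered[OF assms(1)] antitone_list_last[where N = "\<lambda>b. neighbours V E b \<inter> C i"] assms(2)
  unfolding neighbours_def by blast

lemma B_complete_vertex:
  assumes "i \<in> {1..t}"
  obtains b where "b \<in> B i" "\<And>c. c \<in> C i \<Longrightarrow> E b c"
proof -
  obtain bs where "set bs = B i" "neighbours V E (bs ! 0) \<inter> C i = C i"
    using B_ordered[OF assms] by blast
  moreover have "bs ! 0 \<in> B i"
    using calculation(1) B_nonempty[OF assms] by (metis length_greater_0_conv nth_mem set_empty)
  ultimately show thesis
    using that[of "bs ! 0"] unfolding neighbours_def by blast
qed

lemma C_neighbour_of_B:
  assumes "i \<in> {1..t}" "b \<in> B i" "c \<in> V" "kind c = C_part" "E b c"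
  shows "c \<in> C i"
  using assms kind_C_D B_C_anticomplete[of i "idx c"] unfolding anticomplete_to_def by metis

sublocale villa_labelling V E kind idx
proof
  fix x y assume x: "x \<in> V" and y: "y \<in> V"
  show "E x y \<Longrightarrow> E y x" "\<not> E x x"
    using x y graph unfolding graph_def by blast+
  show "x \<noteq> y \<Longrightarrow> kind x = A_part \<Longrightarrow> kind y = A_part \<Longrightarrow> E x y"
    using x y kind_A_D A_clique unfolding clique_def by blast
  show "kind x = A_part \<Longrightarrow> kind y = B_part \<Longrightarrow> E x y"
    using x y kind_A_D kind_B_D A_B_complete unfolding complete_to_def by blast
  show "kind x = A_part \<Longrightarrow> kind y = C_part \<Longrightarrow> \<not> E x y"
    using x y kind_A_D kind_C_D A_C_anticomplete unfolding anticomplete_to_def by blast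
  show "x \<noteq> y \<Longrightarrow> kind x = B_part \<Longrightarrow> kind y = B_part \<Longrightarrow> E x y \<longleftrightarrow> idx x = idx y"
    using x y kind_B_D B_clique B_B_anticomplete unfolding clique_def anticomplete_to_def by metis
  show "x \<noteq> y \<Longrightarrow> kind x = C_part \<Longrightarrow> kind y = C_part \<Longrightarrow> E x y"
    using x y kind_C_D C_clique C_C_complete unfolding clique_def complete_to_def by metis
  show "kind x = B_part \<Longrightarrow> kind y = C_part \<Longrightarrow> E x y \<Longrightarrow> idx x = idx y"
    using x y kind_B_D kind_C_D B_C_anticomplete unfolding anticomplete_to_def by metis
next
  fix b b' assume "b \<in> V" "b' \<in> V" "kind b = B_part" "kind b' = B_part" "idx b = idx b'"
  then have "idx b \<in> {1..t}" "b \<in> B (idx b)" "b' \<in> B (idx b)"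
    using kind_B_D by metis+
  then show "(\<forall>c\<in>V. kind c = C_part \<longrightarrow> E b c \<longrightarrow> E b' c) \<or> (\<forall>c\<in>V. kind c = C_part \<longrightarrow> E b' c \<longrightarrow> E b c)"
    using B_nested C_neighbour_of_B unfolding neighbours_def by blast
qed

lemma has_induced_pentagon: "has_induced V E (pentagon_V t) pentagon_E"
proof -
  obtain a where a: "a \<in> A"
    using A_nonempty by blast
  have "\<forall>i\<in>{1..t}. \<exists>x. x \<in> B i \<and> (\<forall>c\<in>C i. E x c)"
    using B_complete_vertex by metis
  then obtain b where b: "\<And>i. i \<in> {1..t} \<Longrightarrow> b i \<in> B i \<and> (\<forall>c\<in>C i. E (b i) c)"
    by metis
  have "\<forall>i\<in>{1..t}. \<exists>x. x \<in> C i"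
    using C_nonempty by blast
  then obtain c where c: "\<And>i. i \<in> {1..t} \<Longrightarrow> c i \<in> C i"
    by metis
  define f where "f v = (case v of PA \<Rightarrow> a | PB i \<Rightarrow> b i | PC i \<Rightarrow> c i)" for v
  have f_V: "f v \<in> V" and part_f: "part (f v) = v" if "v \<in> pentagon_V t" for v
    using that a b c kind_A_I kind_B_I kind_C_I unfolding pentagon_V_def by (auto simp: f_def part_def)
  have B_C_edge: "E (f (PB i)) (f (PC i))" if "i \<in> {1..t}" for i
    using b c that by (simp add: f_def)
  show ?thesis
    unfolding has_induced_def
  proof (intro exI conjI)
    show "inj_on f (pentagon_V t)"
      using part_f by (rule inj_on_inverseI)
    show "f ` pentagon_V t \<subseteq> V"
      using f_V by blast
    show "\<forall>x\<in>pentagon_V t. \<forall>y\<in>pentagon_V t. pentagon_E x y \<longleftrightarrow> E (f x) (f y)"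
    proof (intro ballI)
      fix x y assume x: "x \<in> pentagon_V t" and y: "y \<in> pentagon_V t"
      show "pentagon_E x y \<longleftrightarrow> E (f x) (f y)"
      proof (cases "\<exists>i. {x, y} = {PB i, PC i}")
        case True
        then obtain i where "{x, y} = {PB i, PC i}" by blast
        moreover have "i \<in> {1..t}"
          using calculation x unfolding pentagon_V_def by (auto simp: doubleton_eq_iff)
        ultimately show ?thesis
          using B_C_edge sym f_V x y by (auto simp: doubleton_eq_iff)
      next
        case False
        show ?thesis
        proof (cases "x = y")
          case True
          then show ?thesis
            using irrefl f_V x by (cases x) auto
        next
          case False
          then have "f x \<noteq> f y"
            using part_f x y by metis
          then show ?thesis
            using adjacent_iff_part[of "f x" "f y"] \<open>\<nexists>i. {x, y} = {PB i, PC i}\<close> False f_V part_f x y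
            by auto
        qed
      qed
    qed
  qed
qed

lemma anticonnected_villa:
  assumes "2 \<le> t"
  shows "anticonnected V E"
proof -
  let ?R = "\<lambda>u v. u \<in> V \<and> v \<in> V \<and> complement E u v"
  obtain a where a: "a \<in> A"
    using A_nonempty by blast
  have C_to_a: "?R c a" if "i \<in> {1..t}" "c \<in> C i" for i c
    using a that kind_A_I kind_C_I A_C sym unfolding complement_def by (metis part_kind.distinct(3))
  have via_C: "?R\<^sup>*\<^sup>* x a" if "?R x c" "i \<in> {1..t}" "c \<in> C i" for x i c
    using converse_rtranclp_into_rtranclp[where r = ?R, OF that(1)
        r_into_rtranclp[where r = ?R, OF C_to_a[OF that(2,3)]]] .
  show ?thesis
    unfolding anticonnected_def
  proof (rule graph_connected_hub[where h = a])
    fix x y assume "x \<in> V" "y \<in> V" "complement E x y"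
    then show "complement E y x"
      using sym unfolding complement_def by blast
  next
    fix x assume "x \<in> V"
    then show "?R\<^sup>*\<^sup>* x a"
    proof (cases rule: vertex_cases)
      case 1
      have one: "1 \<in> {1..t}"
        using assms by simp
      then obtain c where c: "c \<in> C 1"
        using C_nonempty by blast
      show ?thesis
      proof (cases "x = a")
        case False
        then have "?R x c"
          using 1 c one kind_A_I kind_C_I A_C unfolding complement_def by (metis part_kind.distinct(3))
        then show ?thesis
          using via_C c one by blast
      qed simp
    next
      case (2 i)
      obtain j where j: "j \<in> {1..t}" "j \<noteq> i"
        using other_index assms by blast
      then obtain c where c: "c \<in> C j"
        using C_nonempty by blast
      have "?R x c"
        using 2 j c kind_B_I kind_C_I B_C_anticomplete[of i j] unfolding complement_def anticomplete_to_def
        by (metis part_kind.distinct(5))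
      then show ?thesis
        using via_C j c by blast
    next
      case (3 i)
      then show ?thesis
        using C_to_a by blast
    qed
  qed
qed

lemma not_simplicial:
  assumes "2 \<le> t" "v \<in> V"
  shows "\<not> simplicial V E v"
proof -
  have one: "1 \<in> {1..t}"
    using assms(1) by simp
  have "\<exists>x\<in>V. \<exists>y\<in>V. E v x \<and> E v y \<and> x \<noteq> y \<and> \<not> E x y"
    using assms(2)
  proof (cases rule: vertex_cases)
    case 1
    obtain j where j: "j \<in> {1..t}" "j \<noteq> 1"
      using other_index[OF assms(1)] by blast
    obtain x y where x: "x \<in> B 1" and y: "y \<in> B j"
      using B_nonempty one j by blast
    have "x \<in> V" "y \<in> V" "x \<noteq> y"
      using x y B_subset one j B_disjoint[OF one j(1)] by blast+
    moreover have "E v x" "E v y"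
      using 1 x y A_B_complete one j(1) unfolding complete_to_def by blast+
    moreover have "\<not> E x y"
      using x y B_B_anticomplete[OF one j(1)] j(2) unfolding anticomplete_to_def by auto
    ultimately show ?thesis by blast
  next
    case (2 i)
    obtain c where c: "c \<in> C i" "E v c"
      using B_has_C_neighbour 2 by blast
    obtain a where a: "a \<in> A"
      using A_nonempty by blast
    have "a \<in> V" "c \<in> V" "a \<noteq> c"
      using a c A_subset C_subset[OF 2(1)] A_C_disjoint[OF 2(1)] by blast+
    moreover have "E v a"
      using a 2 A_subset A_B_complete[OF 2(1)] sym[of a v] assms(2) unfolding complete_to_def by blast
    moreover have "\<not> E a c"
      using a c A_C_anticomplete[OF 2(1)] unfolding anticomplete_to_def by blast
    ultimately show ?thesis
      using c(2) by blast
  next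
    case (3 i)
    obtain b where b: "b \<in> B i" "\<And>c. c \<in> C i \<Longrightarrow> E b c"
      using B_complete_vertex[OF 3(1)] by blast
    obtain j where j: "j \<in> {1..t}" "j \<noteq> i"
      using other_index assms(1) by blast
    then obtain c where c: "c \<in> C j"
      using C_nonempty by blast
    have "b \<in> V" "c \<in> V" "b \<noteq> c"
      using b(1) c B_subset[OF 3(1)] C_subset[OF j(1)] B_C_disjoint[OF 3(1) j(1)] by blast+
    moreover have "E v b"
      using b 3(2) B_subset[OF 3(1)] assms(2) sym[of b v] by blast
    moreover have "E v c"
      using 3 c C_C_complete[OF 3(1) j(1)] j(2) unfolding complete_to_def by auto
    moreover have "\<not> E b c"
      using b(1) c B_C_anticomplete[OF 3(1) j(1)] j(2) unfolding anticomplete_to_def by auto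
    ultimately show ?thesis by blast
  qed
  then show ?thesis
    unfolding simplicial_def clique_def neighbours_def by blast
qed

lemma not_universal:
  assumes "2 \<le> t" "v \<in> V"
  shows "\<not> universal V E v"
proof -
  have "\<exists>u\<in>V. u \<noteq> v \<and> \<not> E v u"
    using assms(2)
  proof (cases rule: vertex_cases)
    case 1
    have one: "1 \<in> {1..t}"
      using assms(1) by simp
    then obtain c where c: "c \<in> C 1"
      using C_nonempty by blast
    have "c \<in> V" "c \<noteq> v" "\<not> E v c"
      using 1 c C_subset[OF one] A_C_disjoint[OF one] A_C_anticomplete[OF one]
      unfolding anticomplete_to_def by blast+
    then show ?thesis by blast
  next
    case (2 i)
    obtain j where j: "j \<in> {1..t}" "j \<noteq> i"
      using other_index assms(1) by blast
    then obtain b where b: "b \<in> B j"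
      using B_nonempty by blast
    have "b \<in> V" "b \<noteq> v" "\<not> E v b"
      using 2 j b B_subset[OF j(1)] B_disjoint[OF 2(1) j(1)] B_B_anticomplete[OF 2(1) j(1)]
      unfolding anticomplete_to_def by auto
    then show ?thesis by blast
  next
    case (3 i)
    obtain a where a: "a \<in> A"
      using A_nonempty by blast
    have "a \<in> V" "a \<noteq> v" "\<not> E a v"
      using 3 a A_subset A_C_disjoint[OF 3(1)] A_C_anticomplete[OF 3(1)]
      unfolding anticomplete_to_def by blast+
    then show ?thesis
      using assms(2) sym[of v a] by blast
  qed
  then show ?thesis
    unfolding universal_def by blast
qed

end

theorem proposition5p3:
  fixes t :: nat and V :: "'a set" and E :: "'a \<Rightarrow> 'a \<Rightarrow> bool"
  assumes "t \<ge> 3" and "villa t V E"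
  shows "\<not> has_induced V E twoP3_V twoP3_E \<and>
         \<not> has_induced V E (cycle_V 4) (cycle_E 4) \<and>
         \<not> has_induced V E (cycle_V 6) (cycle_E 6) \<and>
         \<not> has_induced V E (cycle_V 7) (cycle_E 7) \<and>
         \<not> has_induced V E T0_V T0_E \<and>
         has_induced V E (pentagon_V t) pentagon_E \<and>
         anticonnected V E \<and>
         (\<forall>v\<in>V. \<not> simplicial V E v) \<and>
         (\<forall>v\<in>V. \<not> universal V E v)"
proof -
  obtain A B C where "villa_partition t V E A B C"
    using villa_partition_of_villa[OF assms(2)] .
  then interpret villa_partition t V E A B C .
  have "2 \<le> t"
    using assms(1) by simp
  then show ?thesis
    using no_induced_2P3 no_induced_C4 no_induced_long_cycle[of 6] no_induced_long_cycle[of 7]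
      no_induced_T0 has_induced_pentagon anticonnected_villa not_simplicial not_universal
    by simp
qed

end
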